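(* Let $T\in\mathbb{N}$. Consider random regressors $M_t\in\mathbb{R}^{m\times n}$, outputs $y_{t+1}\in\mathbb{R}^m$ and noise $w_t\in\mathbb{R}^m$ with $y_{t+1}=M_t\theta^\star+w_t$ for $t=0,\dots,T-1$, where $\theta^\star\in\mathbb{R}^n$ is deterministic. Let $\mathcal{D}_t=\{M_0,y_1,M_1,\dots,y_t,M_t\}$, $W\succ0$ a symmetric positive definite $m\times m$ matrix, $V_T=\sum_{k=0}^{T-1}M_k^\top W M_k$, and, when $V_T$ is invertible, let $\hat\theta_T = V_T^{-1}\sum_{k=0}^{T-1}M_k^\top W y_{k+1}$ be the (weighted) ordinary least squares estimate. Assume that for a known $c_w>0$ and all $t\in\{0,\dots,T-1\}$, $\mathbb{E}[e^{\nu^\top w_t}\mid\mathcal{D}_t]\le e^{\frac12 c_w^2\nu^\top W^{-1}\nu}$ for all $\nu\in\mathbb{R}^m$. Assume further that $\mathbb{E}[V_T]\succ 0$ and that, for some deterministic $\varepsilon\in(0,1)$ and some $\delta'\in(0,1)$, $$(1-\varepsilon)\mathbb{E}[V_T]\preceq V_T\preceq(1+\varepsilon)\mathbb{E}[V_T]$$ holds with probability at least $1-\delta'$. Then for any $\delta\in(0,1)$, with probability at least $1-(\delta+\delta')$, $$\|\theta^\star-\hat\theta_T\|_{V_T}\le c_w\sqrt{2n\log\left(\frac{2}{1-\varepsilon}\right)+4\log(1/\delta)}.$$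
   Context: For a symmetric positive semidefinite $A$, $\|x\|_A=\sqrt{x^\top A x}$. $A\preceq B$ means $B-A$ is positive semidefinite. *)

theory Defs
  imports "HOL-Probability.Probability"
begin

definition psd :: "real^'n^'n \<Rightarrow> bool" where
  "psd A \<longleftrightarrow> transpose A = A \<and> (\<forall>x. 0 \<le> x \<bullet> (A *v x))"

definition pd :: "real^'n^'n \<Rightarrow> bool" where
  "pd A \<longleftrightarrow> transpose A = A \<and> (\<forall>x. x \<noteq> 0 \<longrightarrow> 0 < x \<bullet> (A *v x))"

definition loewner_le :: "real^'n^'n \<Rightarrow> real^'n^'n \<Rightarrow> bool" where
  "loewner_le A B \<longleftrightarrow> psd (B - A)"

definition A_norm :: "real^'n^'n \<Rightarrow> real^'n \<Rightarrow> real" where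
  "A_norm A x = sqrt (x \<bullet> (A *v x))"

definition data_sigma ::
  "'a measure \<Rightarrow> (nat \<Rightarrow> 'a \<Rightarrow> real^'n^'m) \<Rightarrow> (nat \<Rightarrow> 'a \<Rightarrow> real^'m) \<Rightarrow> nat \<Rightarrow> 'a measure" where
  "data_sigma M Mx y t = sigma (space M)
     ({Mx k -` A \<inter> space M | k A. k \<le> t \<and> A \<in> sets borel} \<union>
      {y (Suc k) -` B \<inter> space M | k B. k < t \<and> B \<in> sets borel})"

definition gram :: "real^'m^'m \<Rightarrow> (nat \<Rightarrow> 'a \<Rightarrow> real^'n^'m) \<Rightarrow> nat \<Rightarrow> 'a \<Rightarrow> real^'n^'n" where
  "gram W Mx T x = (\<Sum>k<T. transpose (Mx k x) ** W ** Mx k x)"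

definition ols :: "real^'m^'m \<Rightarrow> (nat \<Rightarrow> 'a \<Rightarrow> real^'n^'m) \<Rightarrow> (nat \<Rightarrow> 'a \<Rightarrow> real^'m) \<Rightarrow> nat \<Rightarrow> 'a \<Rightarrow> real^'n" where
  "ols W Mx y T x = matrix_inv (gram W Mx T x) *v (\<Sum>k<T. transpose (Mx k x) *v (W *v y (Suc k) x))"

end

theory Submission
  imports Defs
begin

(*
  Method of mixtures. Write V = V_T, S = sum_k M_k^T W w_k and c = c_w. For a fixed
  direction l, Z_T(l) = exp (l.S - c^2/2 l.V l) is a product of conditionally
  sub-Gaussian factors, hence E Z_T(l) <= 1; the sub-Gaussian bound is only assumed for
  deterministic nu, and is extended to D_t-measurable nu by simple-function approximation
  and Fatou. Integrating l against the Gaussian weight exp (-a l.E[V] l),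
  a = c^2 (1 - eps) / 2, gives H with E H <= K_a (the integral of the weight), so
  H < K_a / delta outside an event of probability at most delta (Markov).
  On the event (1 - eps) E[V] <= V <= (1 + eps) E[V], pairing l = mu + u with mu - u,
  where mu = V^-1 S / (2 c^2), shows H >= exp (|V^-1 S|_V^2 / (4 c^2)) K_(c^2).
  Since theta - theta_hat = - V^-1 S and K_(c^2) / K_a = ((1 - eps) / 2)^(n/2), the two
  bounds on H give the claim; a union bound with the event of probability 1 - delta'
  finishes the proof.
*)

section \<open>Matrices and quadratic forms\<close>

lemma invertible_matrix_inv_mult:
  fixes A :: "'a::semiring_1^'n^'n"
  assumes "invertible A"
  shows "A ** matrix_inv A = mat 1" and "matrix_inv A ** A = mat 1"
  using someI_ex[OF assms[unfolded invertible_def]] by (simp_all add: matrix_inv_def)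

lemma matrix_inv_mult_vector_cancel:
  fixes A :: "'a::comm_semiring_1^'n^'n"
  assumes "invertible A"
  shows "matrix_inv A *v (A *v v) = v" and "A *v (matrix_inv A *v v) = v"
  by (simp_all add: matrix_vector_mul_assoc invertible_matrix_inv_mult[OF assms])

lemma pd_imp_invertible:
  fixes A :: "real^'n^'n"
  assumes "pd A"
  shows "invertible A"
proof -
  have "inj ((*v) A)"
    using assms unfolding vec.inj_iff_eq_0 pd_def by (metis inner_zero_right less_irrefl)
  then show ?thesis
    by (metis invertible_def matrix_left_invertible_injective matrix_left_right_inverse)
qed

lemma inner_matrix_vector_transpose:
  fixes A :: "real^'n^'m"
  shows "(A *v x) \<bullet> y = x \<bullet> (transpose A *v y)"
  unfolding transpose_matrix_vector by (metis dot_lmul_matrix inner_commute)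

lemma symmetric_matrix_inner_commute:
  fixes A :: "real^'n^'n"
  assumes "transpose A = A"
  shows "x \<bullet> (A *v y) = y \<bullet> (A *v x)"
  by (metis assms inner_commute inner_matrix_vector_transpose)

lemma sum_matrix_vector_mult:
  fixes A :: "'i \<Rightarrow> real^'n^'m"
  shows "(\<Sum>k\<in>K. A k) *v x = (\<Sum>k\<in>K. A k *v x)"
  by (induct K rule: infinite_finite_induct) (simp_all add: matrix_vector_mult_add_rdistrib)

lemma quadratic_form_add:
  fixes A :: "real^'n^'n"
  assumes "transpose A = A"
  shows "(x + y) \<bullet> (A *v (x + y)) = x \<bullet> (A *v x) + 2 * (y \<bullet> (A *v x)) + y \<bullet> (A *v y)"
  using symmetric_matrix_inner_commute[OF assms, of x y]
  by (simp add: matrix_vector_right_distrib inner_add_left inner_add_right)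

lemma quadratic_form_diff:
  fixes A :: "real^'n^'n"
  assumes "transpose A = A"
  shows "(x - y) \<bullet> (A *v (x - y)) = x \<bullet> (A *v x) - 2 * (y \<bullet> (A *v x)) + y \<bullet> (A *v y)"
  using symmetric_matrix_inner_commute[OF assms, of x y]
  by (simp add: vec.diff inner_diff_left inner_diff_right)

lemma loewner_le_quadratic_form:
  fixes A B :: "real^'n^'n"
  assumes "loewner_le A B"
  shows "x \<bullet> (A *v x) \<le> x \<bullet> (B *v x)"
  using assms
  by (simp add: loewner_le_def psd_def matrix_vector_mult_diff_rdistrib inner_diff_right)

lemma quadratic_form_scaleR:
  fixes A :: "real^'n^'n"
  shows "x \<bullet> ((c *\<^sub>R A) *v x) = c * (x \<bullet> (A *v x))"
  by (simp add: scaleR_matrix_vector_assoc[symmetric])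

lemma pd_if_loewner_le_pd:
  fixes S V :: "real^'n^'n"
  assumes "pd S" "0 < c" "loewner_le (c *\<^sub>R S) V"
  shows "pd V"
  unfolding pd_def
proof (intro conjI allI impI)
  have "transpose (V - c *\<^sub>R S) = V - c *\<^sub>R S" "transpose S = S"
    using assms by (simp_all add: loewner_le_def psd_def pd_def)
  then show "transpose V = V"
    by (simp add: transpose_def vec_eq_iff)
  fix x :: "real^'n" assume "x \<noteq> 0"
  then have "0 < c * (x \<bullet> (S *v x))"
    using assms by (simp add: pd_def)
  also have "\<dots> \<le> x \<bullet> (V *v x)"
    using loewner_le_quadratic_form[OF assms(3)] by (simp add: quadratic_form_scaleR)
  finally show "0 < x \<bullet> (V *v x)" .
qed

lemma pd_quadratic_form_ge:
  fixes S :: "real^'n^'n"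
  assumes "pd S"
  obtains m where "0 < m" "\<And>x. m * (x \<bullet> x) \<le> x \<bullet> (S *v x)"
proof -
  have "continuous_on (sphere 0 1) (\<lambda>x. x \<bullet> (S *v x))"
    by (intro continuous_intros matrix_vector_mult_linear_continuous_on continuous_on_id)
  from continuous_attains_inf[OF compact_sphere _ this]
  obtain u where u: "u \<in> sphere 0 1" "\<And>v. v \<in> sphere 0 1 \<Longrightarrow> u \<bullet> (S *v u) \<le> v \<bullet> (S *v v)"
    by fastforce
  have "u \<bullet> (S *v u) * (x \<bullet> x) \<le> x \<bullet> (S *v x)" for x
  proof (cases "x = 0")
    case False
    have "u \<bullet> (S *v u) \<le> (x /\<^sub>R norm x) \<bullet> (S *v (x /\<^sub>R norm x))"
      using False by (intro u(2)) simp
    also have "\<dots> = x \<bullet> (S *v x) / (x \<bullet> x)"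
      by (simp add: matrix_vector_mult_scaleR power2_norm_eq_inner[symmetric] power2_eq_square divide_inverse)
    finally show ?thesis
      using False by (simp add: pos_le_divide_eq mult.commute)
  qed simp
  moreover have "0 < u \<bullet> (S *v u)"
    using assms u(1) unfolding pd_def by (metis mem_sphere_0 norm_zero zero_neq_one)
  ultimately show ?thesis using that by blast
qed

section \<open>Measurability of matrix operations\<close>

lemma borel_measurable_vec_nth [measurable (raw)]:
  fixes f :: "'a \<Rightarrow> 'b::euclidean_space^'n"
  assumes "f \<in> borel_measurable M"
  shows "(\<lambda>x. f x $ i) \<in> borel_measurable M"
  using measurable_compose[OF assms borel_measurable_continuous_onI[OF
      linear_continuous_on[OF bounded_linear_vec_nth]]] .

lemma borel_measurable_vec_lambda [measurable (raw)]:
  fixes f :: "'n::finite \<Rightarrow> 'a \<Rightarrow> 'b::euclidean_space"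
  assumes "\<And>i. f i \<in> borel_measurable M"
  shows "(\<lambda>x. \<chi> i. f i x) \<in> borel_measurable M"
proof (subst borel_measurable_euclidean_space, intro ballI)
  fix b :: "'b^'n" assume "b \<in> Basis"
  then obtain i u where b: "b = axis i u" "u \<in> Basis" by (auto simp: Basis_vec_def)
  have "(\<lambda>x. f i x \<bullet> u) \<in> borel_measurable M"
    using assms by measurable
  then show "(\<lambda>x. (\<chi> i. f i x) \<bullet> b) \<in> borel_measurable M" by (simp add: b inner_axis)
qed

lemma borel_measurable_matrix_vector_mult [measurable (raw)]:
  fixes f :: "'a \<Rightarrow> real^'n^'m" and g :: "'a \<Rightarrow> real^'n"
  assumes "f \<in> borel_measurable M" "g \<in> borel_measurable M"
  shows "(\<lambda>x. f x *v g x) \<in> borel_measurable M"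
  unfolding matrix_vector_mult_def using assms by measurable

lemma borel_measurable_matrix_matrix_mult [measurable (raw)]:
  fixes f :: "'a \<Rightarrow> real^'n^'m" and g :: "'a \<Rightarrow> real^'k^'n"
  assumes "f \<in> borel_measurable M" "g \<in> borel_measurable M"
  shows "(\<lambda>x. f x ** g x) \<in> borel_measurable M"
  unfolding matrix_matrix_mult_def using assms by measurable

lemma borel_measurable_transpose [measurable (raw)]:
  fixes f :: "'a \<Rightarrow> real^'n^'m"
  assumes "f \<in> borel_measurable M"
  shows "(\<lambda>x. transpose (f x)) \<in> borel_measurable M"
  unfolding transpose_def using assms by measurable

lemma borel_measurable_det [measurable (raw)]:
  fixes f :: "'a \<Rightarrow> real^'n^'n"
  assumes "f \<in> borel_measurable M"
  shows "(\<lambda>x. det (f x)) \<in> borel_measurable M"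
  unfolding det_def using assms by measurable

lemma matrix_inv_cramer:
  fixes A :: "real^'n^'n"
  assumes "det A \<noteq> 0"
  shows "matrix_inv A = (\<chi> i j. det (\<chi> p q. if q = i then axis j 1 $ p else A $ p $ q) / det A)"
proof -
  have inv: "A ** matrix_inv A = mat 1"
    using assms by (simp add: invertible_matrix_inv_mult flip: invertible_det_nz)
  have "matrix_inv A $ i $ j = det (\<chi> p q. if q = i then axis j 1 $ p else A $ p $ q) / det A" for i j
  proof -
    have "A *v (matrix_inv A *v axis j 1) = axis j 1"
      by (simp add: matrix_vector_mul_assoc inv)
    then have "matrix_inv A *v axis j 1 = (\<chi> k. det (\<chi> p q. if q = k then axis j 1 $ p else A $ p $ q) / det A)"
      using cramer[OF assms] by blast
    then show ?thesis
      by (metis (no_types, lifting) column_def matrix_vector_mult_basis vec_lambda_beta)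
  qed
  then show ?thesis by (simp add: vec_eq_iff)
qed

lemma matrix_inv_not_invertible:
  "\<not> invertible A \<Longrightarrow> matrix_inv A = (SOME A'. False)"
  unfolding invertible_def matrix_inv_def by (intro arg_cong[where f = Eps]) auto

(* On singular matrices matrix_inv is one fixed junk value, so by Cramer's rule it is
   a measurable function of the matrix. *)
lemma borel_measurable_matrix_inv [measurable (raw)]:
  fixes f :: "'a \<Rightarrow> real^'n^'n"
  assumes [measurable]: "f \<in> borel_measurable M"
  shows "(\<lambda>x. matrix_inv (f x)) \<in> borel_measurable M"
proof -
  have "(\<lambda>x. if det (f x) = 0 then (SOME A'. False)
          else \<chi> i j. det (\<chi> p q. if q = i then axis j 1 $ p else f x $ p $ q) / det (f x))
        \<in> borel_measurable M"
    by measurable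
  then show ?thesis
    by (rule measurable_cong[THEN iffD1, rotated])
       (simp add: matrix_inv_cramer matrix_inv_not_invertible invertible_det_nz)
qed

section \<open>Gaussian integrals\<close>

lemma nn_integral_lborel_affine:
  fixes f :: "'b::euclidean_space \<Rightarrow> ennreal"
  assumes [measurable]: "f \<in> borel_measurable borel" and "c \<noteq> 0"
  shows "(\<integral>\<^sup>+x. f x \<partial>lborel) = ennreal (\<bar>c\<bar> ^ DIM('b)) * (\<integral>\<^sup>+x. f (t + c *\<^sub>R x) \<partial>lborel)"
  by (subst lborel_affine[OF \<open>c \<noteq> 0\<close>, of t])
     (simp add: nn_integral_density nn_integral_distr nn_integral_cmult)

lemma nn_integral_exp_neg_square:
  "(\<integral>\<^sup>+t. ennreal (exp (- t\<^sup>2)) \<partial>lborel) = ennreal (sqrt pi)"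
proof -
  let ?\<phi> = "normal_density 0 (1 / sqrt 2)"
  have "exp (- t\<^sup>2) = sqrt pi * ?\<phi> t" for t
    by (simp add: normal_density_def real_sqrt_divide power_divide)
  then have "(\<integral>\<^sup>+t. ennreal (exp (- t\<^sup>2)) \<partial>lborel) = ennreal (sqrt pi) * (\<integral>\<^sup>+t. ?\<phi> t \<partial>lborel)"
    by (simp add: ennreal_mult nn_integral_cmult)
  also have "(\<integral>\<^sup>+t. ?\<phi> t \<partial>lborel) = 1"
    using prob_space.emeasure_space_1[OF prob_space_normal_density[of "1 / sqrt 2" 0]]
    by (simp add: emeasure_density)
  finally show ?thesis by simp
qed

lemma nn_integral_exp_quadratic_form_scale:
  fixes S :: "real^'n^'n"
  assumes "0 < a"
  shows "(\<integral>\<^sup>+x. ennreal (exp (- a * (x \<bullet> (S *v x)))) \<partial>lborel)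
       = ennreal ((1 / sqrt a) ^ CARD('n)) * (\<integral>\<^sup>+x. ennreal (exp (- (x \<bullet> (S *v x)))) \<partial>lborel)"
proof -
  define c where "c = 1 / sqrt a"
  have "c \<noteq> 0" "a * (c * c) = 1"
    using assms by (simp_all add: c_def)
  then have "(\<integral>\<^sup>+x. ennreal (exp (- a * (x \<bullet> (S *v x)))) \<partial>lborel)
     = ennreal (\<bar>c\<bar> ^ DIM(real^'n)) * (\<integral>\<^sup>+x. ennreal (exp (- (x \<bullet> (S *v x)))) \<partial>lborel)"
    by (subst nn_integral_lborel_affine[where c = c and t = 0])
       (simp_all add: matrix_vector_mult_scaleR mult.assoc[symmetric])
  then show ?thesis
    using assms by (simp add: c_def)
qed

lemma nn_integral_exp_quadratic_form_finite:
  fixes S :: "real^'n^'n"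
  assumes "pd S"
  shows "(\<integral>\<^sup>+x. ennreal (exp (- (x \<bullet> (S *v x)))) \<partial>lborel) < \<infinity>"
proof -
  obtain m where m: "0 < m" "\<And>x. m * (x \<bullet> x) \<le> x \<bullet> (S *v x)"
    using pd_quadratic_form_ge[OF assms] by blast
  have "(\<integral>\<^sup>+x. ennreal (exp (- (x \<bullet> (S *v x)))) \<partial>lborel)
      \<le> (\<integral>\<^sup>+x. ennreal (exp (- m * (x \<bullet> (mat 1 *v x)))) \<partial>(lborel :: (real^'n) measure))"
  proof (intro nn_integral_mono ennreal_leI)
    fix x :: "real^'n"
    show "exp (- (x \<bullet> (S *v x))) \<le> exp (- m * (x \<bullet> (mat 1 *v x)))"
      using m(2)[of x] by simp
  qed
  also have "\<dots> = ennreal ((1 / sqrt m) ^ CARD('n)) * (\<integral>\<^sup>+x. ennreal (exp (- (x \<bullet> (mat 1 *v x)))) \<partial>(lborel :: (real^'n) measure))"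
    by (rule nn_integral_exp_quadratic_form_scale[OF m(1)])
  also have "(\<integral>\<^sup>+x. ennreal (exp (- (x \<bullet> (mat 1 *v x)))) \<partial>(lborel :: (real^'n) measure))
      = (\<integral>\<^sup>+x. (\<Prod>b\<in>Basis. ennreal (exp (- (x \<bullet> b)\<^sup>2))) \<partial>(lborel :: (real^'n) measure))"
    by (intro nn_integral_cong)
       (simp add: euclidean_inner[of x x for x] power2_eq_square exp_sum prod_ennreal flip: sum_negf)
  also have "\<dots> = (\<Prod>b\<in>(Basis::(real^'n) set). ennreal (sqrt pi))"
    by (subst nn_integral_lborel_prod) (simp_all add: nn_integral_exp_neg_square)
  also have "ennreal ((1 / sqrt m) ^ CARD('n)) * (\<Prod>b\<in>(Basis::(real^'n) set). ennreal (sqrt pi)) < \<infinity>"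
    by (simp add: ennreal_power ennreal_mult_less_top)
  finally show ?thesis .
qed

lemma nn_integral_exp_quadratic_form_pos:
  fixes S :: "real^'n^'n"
  shows "0 < (\<integral>\<^sup>+x. ennreal (exp (- (x \<bullet> (S *v x)))) \<partial>lborel)"
proof -
  have "\<not> (AE x in (lborel::(real^'n) measure). False)"
    by (simp add: AE_iff_measurable[of UNIV])
  then show ?thesis
    by (simp add: zero_less_iff_neq_zero nn_integral_0_iff_AE)
qed

lemma nn_integral_exp_quadratic_form:
  fixes S :: "real^'n^'n"
  assumes "pd S"
  obtains J where "0 < J" and "\<And>c. 0 < c \<Longrightarrow>
      (\<integral>\<^sup>+x. ennreal (exp (- c * (x \<bullet> (S *v x)))) \<partial>lborel) = ennreal ((1 / sqrt c) ^ CARD('n) * J)"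
proof
  let ?I = "\<integral>\<^sup>+x. ennreal (exp (- (x \<bullet> (S *v x)))) \<partial>lborel"
  have I: "0 < ?I" "?I < \<infinity>"
    using nn_integral_exp_quadratic_form_pos nn_integral_exp_quadratic_form_finite[OF assms] .
  then show "0 < enn2real ?I"
    by (simp add: enn2real_positive_iff)
  fix c :: real assume "0 < c"
  then show "(\<integral>\<^sup>+x. ennreal (exp (- c * (x \<bullet> (S *v x)))) \<partial>lborel) = ennreal ((1 / sqrt c) ^ CARD('n) * enn2real ?I)"
    using I nn_integral_exp_quadratic_form_scale[OF \<open>0 < c\<close>, of S] by (simp add: ennreal_mult)
qed

section \<open>Exponential tilting under conditional sub-Gaussianity\<close>

lemma sum_indicator_level_sets:
  fixes h :: "'b \<Rightarrow> 'a \<Rightarrow> ennreal"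
  assumes "finite (s ` S)" "x \<in> S"
  shows "(\<Sum>v\<in>s ` S. indicator (s -` {v} \<inter> S) x * h v x) = h (s x) x"
proof -
  have "(\<Sum>v\<in>s ` S. indicator (s -` {v} \<inter> S) x * h v x) = (\<Sum>v\<in>s ` S. if v = s x then h v x else 0)"
    using assms(2) by (intro sum.cong) (auto simp: indicator_def)
  also have "\<dots> = h (s x) x"
    using assms by simp
  finally show ?thesis .
qed

lemma (in sigma_finite_subalgebra) nn_integral_exp_tilt_le_simple:
  fixes s w :: "'a \<Rightarrow> 'b::euclidean_space"
  assumes Y[measurable]: "Y \<in> borel_measurable F" "\<And>x. 0 \<le> Y x"
    and s: "simple_function F s"
    and [measurable]: "w \<in> borel_measurable M"
    and ce: "\<And>v. AE x in M. nn_cond_exp M F (\<lambda>x. ennreal (exp (v \<bullet> w x))) x \<le> ennreal (exp (q v))"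
  shows "(\<integral>\<^sup>+x. ennreal (Y x * exp (s x \<bullet> w x - q (s x))) \<partial>M) \<le> (\<integral>\<^sup>+x. ennreal (Y x) \<partial>M)"
proof -
  have space_F: "space F = space M"
    using subalg by (simp add: subalgebra_def)
  define R where "R = s ` space M"
  define g where "g v x = indicator (s -` {v} \<inter> space M) x * ennreal (Y x * exp (- q v))" for v x
  have fin: "finite R"
    using s by (simp add: simple_function_def R_def space_F)
  have gF[measurable]: "g v \<in> borel_measurable F" for v
    using simple_functionD(2)[OF s] unfolding g_def space_F[symmetric] by measurable
  have [measurable]: "Y \<in> borel_measurable M" "s \<in> borel_measurable M" "g v \<in> borel_measurable M" for v
    using measurable_from_subalg[OF subalg] Y(1) borel_measurable_simple_function[OF s] gF by blast+
  have "(\<integral>\<^sup>+x. ennreal (Y x * exp (s x \<bullet> w x - q (s x))) \<partial>M)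
      = (\<integral>\<^sup>+x. (\<Sum>v\<in>R. g v x * ennreal (exp (v \<bullet> w x))) \<partial>M)"
  proof (intro nn_integral_cong)
    fix x assume x: "x \<in> space M"
    have "ennreal (Y x * exp (s x \<bullet> w x - q (s x))) = ennreal (Y x * exp (- q (s x))) * ennreal (exp (s x \<bullet> w x))"
      using Y(2) by (simp add: ennreal_mult'[symmetric] exp_diff exp_minus field_simps)
    then show "ennreal (Y x * exp (s x \<bullet> w x - q (s x))) = (\<Sum>v\<in>R. g v x * ennreal (exp (v \<bullet> w x)))"
      using sum_indicator_level_sets[OF fin[unfolded R_def] x,
          of "\<lambda>v x. ennreal (Y x * exp (- q v)) * ennreal (exp (v \<bullet> w x))"]
      by (simp add: R_def g_def mult.assoc)
  qed
  also have "\<dots> = (\<Sum>v\<in>R. \<integral>\<^sup>+x. g v x * nn_cond_exp M F (\<lambda>x. ennreal (exp (v \<bullet> w x))) x \<partial>M)"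
    by (simp add: nn_integral_sum nn_cond_exp_intg)
  also have "\<dots> \<le> (\<Sum>v\<in>R. \<integral>\<^sup>+x. g v x * ennreal (exp (q v)) \<partial>M)"
  proof (intro sum_mono nn_integral_mono_AE)
    fix v
    show "AE x in M. g v x * nn_cond_exp M F (\<lambda>x. ennreal (exp (v \<bullet> w x))) x \<le> g v x * ennreal (exp (q v))"
      using ce[of v] by eventually_elim (rule mult_left_mono, auto)
  qed
  also have "\<dots> = (\<integral>\<^sup>+x. (\<Sum>v\<in>R. indicator (s -` {v} \<inter> space M) x * ennreal (Y x)) \<partial>M)"
    using Y(2) by (simp add: g_def mult.assoc ennreal_mult'[symmetric] exp_minus)
                  (rule nn_integral_sum[symmetric], measurable)
  also have "\<dots> = (\<integral>\<^sup>+x. ennreal (Y x) \<partial>M)"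
    using fin unfolding R_def by (intro nn_integral_cong sum_indicator_level_sets)
  finally show ?thesis .
qed

lemma (in sigma_finite_subalgebra) nn_integral_exp_tilt_le:
  fixes \<nu> w :: "'a \<Rightarrow> 'b::euclidean_space"
  assumes Y[measurable]: "Y \<in> borel_measurable F" "\<And>x. 0 \<le> Y x"
    and \<nu>: "\<nu> \<in> borel_measurable F"
    and w[measurable]: "w \<in> borel_measurable M"
    and q: "continuous_on UNIV q"
    and ce: "\<And>v. AE x in M. nn_cond_exp M F (\<lambda>x. ennreal (exp (v \<bullet> w x))) x \<le> ennreal (exp (q v))"
  shows "(\<integral>\<^sup>+x. ennreal (Y x * exp (\<nu> x \<bullet> w x - q (\<nu> x))) \<partial>M) \<le> (\<integral>\<^sup>+x. ennreal (Y x) \<partial>M)"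
proof -
  have space_F: "space F = space M"
    using subalg by (simp add: subalgebra_def)
  have [measurable]: "q \<in> borel_measurable borel"
    using q by (rule borel_measurable_continuous_onI)
  obtain s where s: "\<And>i. simple_function F (s i)" "\<And>x. x \<in> space M \<Longrightarrow> (\<lambda>i. s i x) \<longlonglongrightarrow> \<nu> x"
    using borel_measurable_implies_sequence_metric[OF \<nu>, of 0] space_F by auto
  have [measurable]: "Y \<in> borel_measurable M" "s i \<in> borel_measurable M" for i
    using measurable_from_subalg[OF subalg] Y(1) borel_measurable_simple_function[OF s(1)] by blast+
  define f where "f i x = ennreal (Y x * exp (s i x \<bullet> w x - q (s i x)))" for i x
  have lim: "(\<lambda>i. f i x) \<longlonglongrightarrow> ennreal (Y x * exp (\<nu> x \<bullet> w x - q (\<nu> x)))" if "x \<in> space M" for x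
    unfolding f_def using s(2)[OF that] q
    by (intro tendsto_ennrealI tendsto_intros isCont_tendsto_compose[of _ q])
       (auto simp: continuous_on_eq_continuous_at)
  have "(\<integral>\<^sup>+x. ennreal (Y x * exp (\<nu> x \<bullet> w x - q (\<nu> x))) \<partial>M) = (\<integral>\<^sup>+x. liminf (\<lambda>i. f i x) \<partial>M)"
    by (intro nn_integral_cong) (simp add: lim_imp_Liminf[OF trivial_limit_sequentially lim])
  also have "\<dots> \<le> liminf (\<lambda>i. integral\<^sup>N M (f i))"
    by (rule nn_integral_liminf) (simp add: f_def)
  also have "\<dots> \<le> (\<integral>\<^sup>+x. ennreal (Y x) \<partial>M)"
    unfolding f_def using nn_integral_exp_tilt_le_simple[OF Y s(1) w ce]
    by (intro Liminf_le always_eventually) simp_all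
  finally show ?thesis .
qed

section \<open>The Gaussian mixture bound\<close>

lemma nn_integral_lborel_reflect_add:
  fixes f :: "'b::euclidean_space \<Rightarrow> ennreal"
  assumes [measurable]: "f \<in> borel_measurable borel"
  shows "(\<integral>\<^sup>+u. f (t + u) + f (t - u) \<partial>lborel) = 2 * (\<integral>\<^sup>+x. f x \<partial>lborel)"
proof -
  have "(\<integral>\<^sup>+x. f x \<partial>lborel) = (\<integral>\<^sup>+u. f (t + u) \<partial>lborel)"
       "(\<integral>\<^sup>+x. f x \<partial>lborel) = (\<integral>\<^sup>+u. f (t - u) \<partial>lborel)"
    using nn_integral_lborel_affine[of f 1 t] nn_integral_lborel_affine[of f "-1" t] by simp_all
  then show ?thesis
    by (simp add: nn_integral_add mult_2)
qed

lemma nn_integral_lborel_ge_if_reflect: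
  fixes f \<phi> :: "'b::euclidean_space \<Rightarrow> real"
  assumes [measurable]: "f \<in> borel_measurable borel" "\<phi> \<in> borel_measurable borel"
    and "0 \<le> C" "\<And>u. 0 \<le> \<phi> u" "\<And>x. 0 \<le> f x"
    and le: "\<And>u. 2 * (C * \<phi> u) \<le> f (t + u) + f (t - u)"
  shows "ennreal C * (\<integral>\<^sup>+u. ennreal (\<phi> u) \<partial>lborel) \<le> (\<integral>\<^sup>+x. ennreal (f x) \<partial>lborel)"
proof -
  have "2 * (ennreal C * (\<integral>\<^sup>+u. ennreal (\<phi> u) \<partial>lborel)) = (\<integral>\<^sup>+u. ennreal (2 * (C * \<phi> u)) \<partial>lborel)"
    using assms(3,4) by (simp add: nn_integral_cmult[symmetric] ennreal_mult mult.assoc)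
  also have "\<dots> \<le> (\<integral>\<^sup>+u. ennreal (f (t + u)) + ennreal (f (t - u)) \<partial>lborel)"
    using le assms(5) by (intro nn_integral_mono) (simp add: ennreal_plus[symmetric] ennreal_leI del: ennreal_plus)
  also have "\<dots> = 2 * (\<integral>\<^sup>+x. ennreal (f x) \<partial>lborel)"
    by (rule nn_integral_lborel_reflect_add) measurable
  finally show ?thesis
    by (simp add: ennreal_mult_le_mult_iff)
qed

lemma gaussian_mixture_ge:
  fixes V S :: "real^'n^'n" and b d :: "real^'n"
  assumes symV: "transpose V = V" and symS: "transpose S = S" and d: "V *v d = b"
    and c: "0 < c" and \<epsilon>: "0 < \<epsilon>" "\<epsilon> < 1"
    and lower: "\<And>u. (1 - \<epsilon>) * (u \<bullet> (S *v u)) \<le> u \<bullet> (V *v u)"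
    and upper: "\<And>u. u \<bullet> (V *v u) \<le> (1 + \<epsilon>) * (u \<bullet> (S *v u))"
  shows "ennreal (exp (d \<bullet> (V *v d) / (4 * c\<^sup>2))) * (\<integral>\<^sup>+u. ennreal (exp (- c\<^sup>2 * (u \<bullet> (S *v u)))) \<partial>lborel)
     \<le> (\<integral>\<^sup>+l. ennreal (exp (- (1/2 * c\<^sup>2 * (1 - \<epsilon>)) * (l \<bullet> (S *v l))) * exp (l \<bullet> b - 1/2 * c\<^sup>2 * (l \<bullet> (V *v l)))) \<partial>lborel)"
    (is "?lhs \<le> ?rhs")
proof -
  define a where "a = 1/2 * c\<^sup>2 * (1 - \<epsilon>)"
  define g where "g l = - a * (l \<bullet> (S *v l)) + l \<bullet> b - 1/2 * c\<^sup>2 * (l \<bullet> (V *v l))" for l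
  define \<mu> where "\<mu> = (1 / (2 * c\<^sup>2)) *\<^sub>R d"
  define L where "L = b - (2 * a) *\<^sub>R (S *v \<mu>) - c\<^sup>2 *\<^sub>R (V *v \<mu>)"
  define P where "P u = a * (u \<bullet> (S *v u)) + 1/2 * c\<^sup>2 * (u \<bullet> (V *v u))" for u
  have [measurable]: "g \<in> borel_measurable borel"
    unfolding g_def by measurable
  have shift: "g (\<mu> + u) = g \<mu> + u \<bullet> L - P u" "g (\<mu> - u) = g \<mu> - u \<bullet> L - P u" for u
    using symmetric_matrix_inner_commute[OF symS, of \<mu> u] symmetric_matrix_inner_commute[OF symV, of \<mu> u]
    unfolding g_def P_def L_def
    by (simp_all add: quadratic_form_add[OF symV] quadratic_form_add[OF symS]
        quadratic_form_diff[OF symV] quadratic_form_diff[OF symS] inner_diff_right algebra_simps)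
  have P_le: "P u \<le> c\<^sup>2 * (u \<bullet> (S *v u))" for u
    using mult_left_mono[OF upper[of u], of "1/2 * c\<^sup>2"] unfolding P_def a_def
    by (simp add: field_simps)
  have cosh_ge: "2 \<le> exp t + exp (- t)" for t :: real
    using exp_ge_add_one_self[of t] exp_ge_add_one_self[of "- t"] by linarith
  have pair_ge: "2 * (exp (g \<mu>) * exp (- c\<^sup>2 * (u \<bullet> (S *v u)))) \<le> exp (g (\<mu> + u)) + exp (g (\<mu> - u))" for u
  proof -
    have "2 * (exp (g \<mu>) * exp (- c\<^sup>2 * (u \<bullet> (S *v u)))) \<le> 2 * exp (g \<mu> - P u)"
      using P_le[of u] by (simp add: exp_add[symmetric])
    also have "\<dots> \<le> exp (g \<mu> - P u) * (exp (u \<bullet> L) + exp (- (u \<bullet> L)))"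
      using cosh_ge[of "u \<bullet> L"] by (simp add: mult.commute)
    also have "\<dots> = exp (g (\<mu> + u)) + exp (g (\<mu> - u))"
      by (simp add: shift exp_add[symmetric] exp_diff distrib_left field_simps)
    finally show ?thesis .
  qed
  have "ennreal (exp (g \<mu>)) * (\<integral>\<^sup>+u. ennreal (exp (- c\<^sup>2 * (u \<bullet> (S *v u)))) \<partial>lborel)
      \<le> (\<integral>\<^sup>+l. ennreal (exp (g l)) \<partial>lborel)"
    by (rule nn_integral_lborel_ge_if_reflect[OF _ _ _ _ _ pair_ge]) simp_all
  also have "\<dots> = ?rhs"
    by (simp add: g_def a_def exp_add[symmetric] algebra_simps)
  finally have "ennreal (exp (g \<mu>)) * (\<integral>\<^sup>+u. ennreal (exp (- c\<^sup>2 * (u \<bullet> (S *v u)))) \<partial>lborel) \<le> ?rhs" .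
  moreover have "d \<bullet> (V *v d) / (4 * c\<^sup>2) \<le> g \<mu>"
  proof -
    have "g \<mu> = (3 * (d \<bullet> (V *v d)) - (1 - \<epsilon>) * (d \<bullet> (S *v d))) / (8 * c\<^sup>2)"
      using c unfolding g_def a_def \<mu>_def d[symmetric]
      by (simp add: matrix_vector_mult_scaleR power2_eq_square field_simps)
    then show ?thesis
      using lower[of d] c by (simp add: field_simps)
  qed
  ultimately show ?thesis
    by (elim order_trans[rotated]) (intro mult_right_mono ennreal_leI, simp_all)
qed

lemma mixture_threshold:
  fixes c \<epsilon> \<delta> J q :: real and n :: nat
  assumes c: "0 < c" and \<epsilon>: "0 < \<epsilon>" "\<epsilon> < 1" and \<delta>: "0 < \<delta>" and J: "0 < J"
    and less: "\<delta> / ((1 / sqrt (1/2 * c\<^sup>2 * (1 - \<epsilon>))) ^ n * J)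
               * (exp (q / (4 * c\<^sup>2)) * ((1 / sqrt (c\<^sup>2)) ^ n * J)) < 1"
  shows "q < c\<^sup>2 * (2 * real n * ln (2 / (1 - \<epsilon>)) + 4 * ln (1 / \<delta>))"
proof -
  define r where "r = (1 - \<epsilon>) / 2"
  have r: "0 < r"
    using \<epsilon> by (simp add: r_def)
  have "\<delta> / ((1 / sqrt (1/2 * c\<^sup>2 * (1 - \<epsilon>))) ^ n * J) * (exp (q / (4 * c\<^sup>2)) * ((1 / sqrt (c\<^sup>2)) ^ n * J))
      = exp (q / (4 * c\<^sup>2) + ln \<delta> + real n * (ln r / 2))"
    (is "?product = _")
  proof -
    have "1/2 * c\<^sup>2 * (1 - \<epsilon>) = c\<^sup>2 * r"
      by (simp add: r_def)
    then have "?product = \<delta> * exp (q / (4 * c\<^sup>2)) * sqrt r ^ n"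
      using c J r by (simp add: real_sqrt_mult power_divide power_mult_distrib)
    also have "sqrt r = exp (ln r / 2)"
      using r by (simp add: powr_half_sqrt[symmetric] powr_def)
    finally show ?thesis
      using \<delta> by (simp add: exp_add flip: exp_of_nat_mult)
  qed
  with less have "q / (4 * c\<^sup>2) + ln \<delta> + real n * (ln r / 2) < 0"
    by simp
  moreover have "ln (2 / (1 - \<epsilon>)) = - ln r" "ln (1 / \<delta>) = - ln \<delta>"
    using r \<delta> by (simp_all add: r_def ln_div)
  ultimately show ?thesis
    using c by (simp add: field_simps)
qed

section \<open>The regression model\<close>

lemma (in prob_space) prob_ge_if_Diff_subset:
  assumes "G \<in> events" "B \<in> events" "C \<in> events" "G - B \<subseteq> C"
    and "prob B \<le> \<delta>" "1 - \<delta>' \<le> prob G"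
  shows "1 - (\<delta> + \<delta>') \<le> prob C"
proof -
  have "prob G \<le> prob (G - B) + prob B"
    using assms(1,2) finite_measure_Diff'[of G B] finite_measure_mono[of "G \<inter> B" B] by simp
  also have "prob (G - B) \<le> prob C"
    using assms(3,4) by (intro finite_measure_mono)
  finally show ?thesis
    using assms(5,6) by simp
qed

lemma gram_mult_vector:
  "gram W Mx T x *v l = (\<Sum>k<T. transpose (Mx k x) *v (W *v (Mx k x *v l)))"
  by (simp add: gram_def sum_matrix_vector_mult matrix_vector_mul_assoc matrix_mul_assoc)

lemma gram_quadratic_form:
  "l \<bullet> (gram W Mx T x *v l) = (\<Sum>k<T. (Mx k x *v l) \<bullet> (W *v (Mx k x *v l)))"
  unfolding gram_mult_vector inner_sum_right
  by (intro sum.cong refl) (rule inner_matrix_vector_transpose[symmetric])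

locale ols_model =
  fixes M :: "'a measure" and T :: nat
    and Mx :: "nat \<Rightarrow> 'a \<Rightarrow> real^'n^'m"
    and y w :: "nat \<Rightarrow> 'a \<Rightarrow> real^'m"
    and \<theta> :: "real^'n" and W :: "real^'m^'m"
    and cw :: real
  assumes prob: "prob_space M"
    and Mx_measurable: "\<forall>k<T. Mx k \<in> borel_measurable M"
    and w_measurable: "\<forall>k<T. w k \<in> borel_measurable M"
    and y_eq: "\<forall>t<T. \<forall>x\<in>space M. y (Suc t) x = Mx t x *v \<theta> + w t x"
    and pd_W: "pd W" and cw_pos: "0 < cw"
    and subgaussian: "\<forall>t<T. \<forall>\<nu>. AE x in M.
           nn_cond_exp M (data_sigma M Mx y t) (\<lambda>x. ennreal (exp (\<nu> \<bullet> w t x))) x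
             \<le> ennreal (exp (1/2 * cw\<^sup>2 * (\<nu> \<bullet> (matrix_inv W *v \<nu>))))"
begin

abbreviation "data t \<equiv> data_sigma M Mx y t"

lemma measurable_Mx [measurable]: "k < T \<Longrightarrow> Mx k \<in> borel_measurable M"
  using Mx_measurable by simp

lemma measurable_w [measurable]: "k < T \<Longrightarrow> w k \<in> borel_measurable M"
  using w_measurable by simp

lemma y_Suc_eq: "k < T \<Longrightarrow> x \<in> space M \<Longrightarrow> y (Suc k) x = Mx k x *v \<theta> + w k x"
  using y_eq by simp

lemma measurable_y [measurable]: "k < T \<Longrightarrow> y (Suc k) \<in> borel_measurable M"
  by (rule measurable_cong[THEN iffD1, OF y_Suc_eq[symmetric]]) simp_all

lemma space_data [simp]: "space (data t) = space M"
  by (simp add: data_sigma_def space_measure_of_conv)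

lemma sets_data:
  "sets (data t) = sigma_sets (space M)
     ({Mx k -` A \<inter> space M | k A. k \<le> t \<and> A \<in> sets borel} \<union>
      {y (Suc k) -` B \<inter> space M | k B. k < t \<and> B \<in> sets borel})"
  unfolding data_sigma_def by (rule sets_measure_of) auto

lemma subalgebra_data: "t < T \<Longrightarrow> subalgebra M (data t)"
  unfolding subalgebra_def sets_data
  by (auto intro!: sets.sigma_sets_subset measurable_sets[OF measurable_Mx] measurable_sets[OF measurable_y])

lemma finite_measure_subalgebra_data: "t < T \<Longrightarrow> finite_measure_subalgebra M (data t)"
  unfolding finite_measure_subalgebra_def finite_measure_subalgebra_axioms_def
  using subalgebra_data prob prob_space.finite_measure by blast

lemma measurable_Mx_data: "k \<le> t \<Longrightarrow> Mx k \<in> borel_measurable (data t)"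
  by (rule measurableI) (auto simp: sets_data intro!: sigma_sets.Basic)

lemma measurable_y_data: "k < t \<Longrightarrow> y (Suc k) \<in> borel_measurable (data t)"
  by (rule measurableI) (auto simp: sets_data intro!: sigma_sets.Basic)

lemma measurable_w_data: "k < t \<Longrightarrow> t < T \<Longrightarrow> w k \<in> borel_measurable (data t)"
proof -
  assume k: "k < t" "t < T"
  have [measurable]: "Mx k \<in> borel_measurable (data t)" "y (Suc k) \<in> borel_measurable (data t)"
    using measurable_Mx_data measurable_y_data k by simp_all
  have "(\<lambda>x. y (Suc k) x - Mx k x *v \<theta>) \<in> borel_measurable (data t)"
    by measurable
  then show ?thesis
    by (rule measurable_cong[THEN iffD1, rotated]) (use y_Suc_eq k in auto)
qed

definition Z :: "nat \<Rightarrow> real^'n \<Rightarrow> 'a \<Rightarrow> real" where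
  "Z t l x = exp (\<Sum>k<t. (W *v (Mx k x *v l)) \<bullet> w k x - 1/2 * cw\<^sup>2 * ((Mx k x *v l) \<bullet> (W *v (Mx k x *v l))))"

lemma measurable_Z_data: "t < T \<Longrightarrow> Z t l \<in> borel_measurable (data t)"
proof -
  assume t: "t < T"
  have [measurable]: "k \<in> {..<t} \<Longrightarrow> Mx k \<in> borel_measurable (data t)"
    and [measurable]: "k \<in> {..<t} \<Longrightarrow> w k \<in> borel_measurable (data t)" for k
    using measurable_Mx_data measurable_w_data t by simp_all
  show ?thesis unfolding Z_def by measurable
qed

lemma borel_measurable_Z: "t \<le> T \<Longrightarrow> Z t l \<in> borel_measurable M"
proof -
  assume "t \<le> T"
  then have [measurable]: "k \<in> {..<t} \<Longrightarrow> Mx k \<in> borel_measurable M" "k \<in> {..<t} \<Longrightarrow> w k \<in> borel_measurable M" for k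
    by simp_all
  show ?thesis unfolding Z_def by measurable
qed

lemma measurable_Z_pair [measurable]: "(\<lambda>p. Z T (snd p) (fst p)) \<in> borel_measurable (M \<Otimes>\<^sub>M lborel)"
proof -
  have [measurable]: "k \<in> {..<T} \<Longrightarrow> Mx k \<in> borel_measurable M" "k \<in> {..<T} \<Longrightarrow> w k \<in> borel_measurable M" for k
    by simp_all
  show ?thesis unfolding Z_def by measurable
qed

lemma Z_Suc:
  "Z (Suc t) l x = Z t l x * exp (\<nu> \<bullet> w t x - 1/2 * cw\<^sup>2 * (\<nu> \<bullet> (matrix_inv W *v \<nu>)))"
  if "\<nu> = W *v (Mx t x *v l)"
  using matrix_inv_mult_vector_cancel(1)[OF pd_imp_invertible[OF pd_W]]
  by (simp add: that Z_def exp_add[symmetric] inner_commute)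

lemma nn_integral_Z_le_1: "t \<le> T \<Longrightarrow> (\<integral>\<^sup>+x. ennreal (Z t l x) \<partial>M) \<le> 1"
proof (induction t)
  case 0
  then show ?case
    using prob_space.emeasure_space_1[OF prob] by (simp add: Z_def)
next
  case (Suc t)
  then have t: "t < T" by simp
  interpret finite_measure_subalgebra M "data t"
    using finite_measure_subalgebra_data[OF t] .
  have "(\<integral>\<^sup>+x. ennreal (Z (Suc t) l x) \<partial>M) \<le> (\<integral>\<^sup>+x. ennreal (Z t l x) \<partial>M)"
    unfolding Z_Suc[OF refl]
  proof (rule nn_integral_exp_tilt_le[OF measurable_Z_data[OF t]])
    show "(\<lambda>x. W *v (Mx t x *v l)) \<in> borel_measurable (data t)"
      using measurable_Mx_data[of t t] by measurable
    show "continuous_on UNIV (\<lambda>\<nu>. 1/2 * cw\<^sup>2 * (\<nu> \<bullet> (matrix_inv W *v \<nu>)))"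
      by (intro continuous_intros matrix_vector_mult_linear_continuous_on continuous_on_id)
  qed (use t subgaussian in \<open>simp_all add: Z_def\<close>)
  also have "\<dots> \<le> 1"
    using Suc by simp
  finally show ?case .
qed

definition noise_sum :: "'a \<Rightarrow> real^'n" where
  "noise_sum x = (\<Sum>k<T. transpose (Mx k x) *v (W *v w k x))"

lemma Z_T_eq: "Z T l x = exp (l \<bullet> noise_sum x - 1/2 * cw\<^sup>2 * (l \<bullet> (gram W Mx T x *v l)))"
proof -
  have "(W *v (Mx k x *v l)) \<bullet> w k x = l \<bullet> (transpose (Mx k x) *v (W *v w k x))" for k
    using pd_W by (metis inner_matrix_vector_transpose pd_def)
  then show ?thesis
    unfolding Z_def noise_sum_def gram_quadratic_form inner_sum_right
    by (simp add: sum_subtractf sum_distrib_left)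
qed

lemma ols_error_eq:
  assumes "x \<in> space M" and "invertible (gram W Mx T x)"
  shows "\<theta> - ols W Mx y T x = - (matrix_inv (gram W Mx T x) *v noise_sum x)"
proof -
  let ?V = "gram W Mx T x"
  have "(\<Sum>k<T. transpose (Mx k x) *v (W *v y (Suc k) x)) = ?V *v \<theta> + noise_sum x"
    using assms(1)
    by (simp add: y_Suc_eq matrix_vector_right_distrib sum.distrib gram_mult_vector noise_sum_def)
  then show ?thesis
    by (simp add: ols_def matrix_vector_right_distrib matrix_inv_mult_vector_cancel[OF assms(2)])
qed

lemma borel_measurable_ols [measurable]: "ols W Mx y T \<in> borel_measurable M"
proof -
  have [measurable]: "k \<in> {..<T} \<Longrightarrow> Mx k \<in> borel_measurable M" "k \<in> {..<T} \<Longrightarrow> y (Suc k) \<in> borel_measurable M" for k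
    by simp_all
  show ?thesis
    unfolding ols_def[abs_def] gram_def by measurable
qed

definition mixture :: "(real^'n \<Rightarrow> real) \<Rightarrow> 'a \<Rightarrow> ennreal" where
  "mixture \<rho> x = (\<integral>\<^sup>+l. ennreal (\<rho> l * Z T l x) \<partial>lborel)"

lemma borel_measurable_mixture [measurable]:
  assumes [measurable]: "\<rho> \<in> borel_measurable borel"
  shows "mixture \<rho> \<in> borel_measurable M"
  unfolding mixture_def
  by (rule lborel.borel_measurable_nn_integral_fst[of "\<lambda>p. ennreal (\<rho> (snd p) * Z T (snd p) (fst p))", simplified])
     measurable

lemma nn_integral_mixture_le:
  assumes [measurable]: "\<rho> \<in> borel_measurable borel" and "\<And>l. 0 \<le> \<rho> l"
  shows "(\<integral>\<^sup>+x. mixture \<rho> x \<partial>M) \<le> (\<integral>\<^sup>+l. ennreal (\<rho> l) \<partial>lborel)"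
proof -
  interpret pair_sigma_finite M lborel
    unfolding pair_sigma_finite_def using prob_space_imp_sigma_finite[OF prob] sigma_finite_lborel by auto
  have "(\<integral>\<^sup>+x. mixture \<rho> x \<partial>M) = (\<integral>\<^sup>+l. (\<integral>\<^sup>+x. ennreal (\<rho> l) * ennreal (Z T l x) \<partial>M) \<partial>lborel)"
    unfolding mixture_def using assms(2)
    by (subst Fubini[of "\<lambda>p. ennreal (\<rho> (snd p) * Z T (snd p) (fst p))", simplified, symmetric])
       (auto intro!: nn_integral_cong simp: ennreal_mult Z_def)
  also have "\<dots> \<le> (\<integral>\<^sup>+l. ennreal (\<rho> l) * 1 \<partial>lborel)"
  proof (intro nn_integral_mono)
    fix l
    have "(\<integral>\<^sup>+x. ennreal (\<rho> l) * ennreal (Z T l x) \<partial>M) = ennreal (\<rho> l) * (\<integral>\<^sup>+x. ennreal (Z T l x) \<partial>M)"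
      using borel_measurable_Z[OF order.refl, of l] by (intro nn_integral_cmult) measurable
    also have "\<dots> \<le> ennreal (\<rho> l) * 1"
      using nn_integral_Z_le_1[of T l] by (intro mult_left_mono) simp_all
    finally show "(\<integral>\<^sup>+x. ennreal (\<rho> l) * ennreal (Z T l x) \<partial>M) \<le> ennreal (\<rho> l) * 1" .
  qed
  finally show ?thesis by simp
qed

lemma emeasure_mixture_ge_le:
  assumes [measurable]: "\<rho> \<in> borel_measurable borel" and "\<And>l. 0 \<le> \<rho> l"
    and K: "(\<integral>\<^sup>+l. ennreal (\<rho> l) \<partial>lborel) = ennreal K" "0 < K" and "0 \<le> \<delta>"
  shows "emeasure M {x \<in> space M. 1 \<le> ennreal (\<delta> / K) * mixture \<rho> x} \<le> ennreal \<delta>"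
proof -
  have "emeasure M {x \<in> space M. 1 \<le> ennreal (\<delta> / K) * mixture \<rho> x}
      \<le> ennreal (\<delta> / K) * (\<integral>\<^sup>+x. mixture \<rho> x * indicator (space M) x \<partial>M)"
    by (rule nn_integral_Markov_inequality) simp_all
  also have "(\<integral>\<^sup>+x. mixture \<rho> x * indicator (space M) x \<partial>M) = (\<integral>\<^sup>+x. mixture \<rho> x \<partial>M)"
    by (intro nn_integral_cong) simp
  also have "ennreal (\<delta> / K) * \<dots> \<le> ennreal (\<delta> / K) * ennreal K"
    using nn_integral_mixture_le[OF assms(1,2)] K(1) by (intro mult_left_mono) simp_all
  also have "\<dots> = ennreal \<delta>"
    using K(2) \<open>0 \<le> \<delta>\<close> by (simp add: ennreal_mult[symmetric])
  finally show ?thesis .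
qed

lemma ols_error_le_if_mixture_small:
  fixes S :: "real^'n^'n" and \<epsilon> \<delta> J :: real
  defines "a \<equiv> 1/2 * cw\<^sup>2 * (1 - \<epsilon>)"
  assumes S: "pd S" and \<epsilon>: "0 < \<epsilon>" "\<epsilon> < 1" and \<delta>: "0 < \<delta>" and J: "0 < J"
    and gauss: "\<And>c. 0 < c \<Longrightarrow>
      (\<integral>\<^sup>+l. ennreal (exp (- c * (l \<bullet> (S *v l)))) \<partial>lborel) = ennreal ((1 / sqrt c) ^ CARD('n) * J)"
    and x: "x \<in> space M"
    and lower: "loewner_le ((1 - \<epsilon>) *\<^sub>R S) (gram W Mx T x)"
    and upper: "loewner_le (gram W Mx T x) ((1 + \<epsilon>) *\<^sub>R S)"
    and small: "ennreal (\<delta> / ((1 / sqrt a) ^ CARD('n) * J)) * mixture (\<lambda>l. exp (- a * (l \<bullet> (S *v l)))) x < 1"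
  shows "invertible (gram W Mx T x) \<and>
    A_norm (gram W Mx T x) (\<theta> - ols W Mx y T x) \<le> cw * sqrt (2 * real CARD('n) * ln (2 / (1 - \<epsilon>)) + 4 * ln (1 / \<delta>))"
proof
  let ?V = "gram W Mx T x"
  have a: "0 < a"
    using \<epsilon> cw_pos by (simp add: a_def)
  have "pd ?V"
    using pd_if_loewner_le_pd[OF S _ lower] \<epsilon> by simp
  then show inv: "invertible ?V"
    by (rule pd_imp_invertible)
  define d where "d = matrix_inv ?V *v noise_sum x"
  have "ennreal (exp (d \<bullet> (?V *v d) / (4 * cw\<^sup>2))) * ennreal ((1 / sqrt (cw\<^sup>2)) ^ CARD('n) * J)
      \<le> mixture (\<lambda>l. exp (- a * (l \<bullet> (S *v l)))) x"
    unfolding gauss[of "cw\<^sup>2", symmetric, OF zero_less_power[OF cw_pos]] mixture_def Z_T_eq a_def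
  proof (rule gaussian_mixture_ge[OF _ _ _ cw_pos \<epsilon>])
    show "transpose ?V = ?V" "transpose S = S"
      using \<open>pd ?V\<close> S by (simp_all add: pd_def)
    show "?V *v d = noise_sum x"
      unfolding d_def by (rule matrix_inv_mult_vector_cancel(2)[OF inv])
    show "(1 - \<epsilon>) * (u \<bullet> (S *v u)) \<le> u \<bullet> (?V *v u)" "u \<bullet> (?V *v u) \<le> (1 + \<epsilon>) * (u \<bullet> (S *v u))" for u
      using loewner_le_quadratic_form[OF lower, of u] loewner_le_quadratic_form[OF upper, of u]
      by (simp_all add: quadratic_form_scaleR)
  qed
  then have "ennreal (\<delta> / ((1 / sqrt a) ^ CARD('n) * J))
      * ennreal (exp (d \<bullet> (?V *v d) / (4 * cw\<^sup>2)) * ((1 / sqrt (cw\<^sup>2)) ^ CARD('n) * J))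
      \<le> ennreal (\<delta> / ((1 / sqrt a) ^ CARD('n) * J)) * mixture (\<lambda>l. exp (- a * (l \<bullet> (S *v l)))) x"
    using J by (intro mult_left_mono) (simp_all add: ennreal_mult)
  then have "ennreal (\<delta> / ((1 / sqrt a) ^ CARD('n) * J))
      * ennreal (exp (d \<bullet> (?V *v d) / (4 * cw\<^sup>2)) * ((1 / sqrt (cw\<^sup>2)) ^ CARD('n) * J)) < 1"
    using small by (rule order.strict_trans1)
  then have "\<delta> / ((1 / sqrt a) ^ CARD('n) * J)
      * (exp (d \<bullet> (?V *v d) / (4 * cw\<^sup>2)) * ((1 / sqrt (cw\<^sup>2)) ^ CARD('n) * J)) < 1"
    by (subst (asm) ennreal_mult'[symmetric]) (use J \<delta> a in simp_all)
  then have "d \<bullet> (?V *v d) < cw\<^sup>2 * (2 * real CARD('n) * ln (2 / (1 - \<epsilon>)) + 4 * ln (1 / \<delta>))"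
    using mixture_threshold[OF cw_pos \<epsilon> \<delta> J] by (simp add: a_def)
  then have "sqrt (d \<bullet> (?V *v d)) \<le> sqrt (cw\<^sup>2 * (2 * real CARD('n) * ln (2 / (1 - \<epsilon>)) + 4 * ln (1 / \<delta>)))"
    by simp
  then show "A_norm ?V (\<theta> - ols W Mx y T x) \<le> cw * sqrt (2 * real CARD('n) * ln (2 / (1 - \<epsilon>)) + 4 * ln (1 / \<delta>))"
    using cw_pos by (simp add: ols_error_eq[OF x inv] A_norm_def d_def[symmetric] vec.neg real_sqrt_mult)
qed

lemma ols_error_bounded_off_small_event:
  fixes S :: "real^'n^'n" and \<epsilon> \<delta> :: real
  assumes S: "pd S" and \<epsilon>: "0 < \<epsilon>" "\<epsilon> < 1" and \<delta>: "0 < \<delta>"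
  obtains B where "B \<in> sets M" "measure M B \<le> \<delta>"
    and "\<And>x. x \<in> space M \<Longrightarrow> x \<notin> B \<Longrightarrow>
      loewner_le ((1 - \<epsilon>) *\<^sub>R S) (gram W Mx T x) \<Longrightarrow> loewner_le (gram W Mx T x) ((1 + \<epsilon>) *\<^sub>R S) \<Longrightarrow>
      invertible (gram W Mx T x) \<and>
      A_norm (gram W Mx T x) (\<theta> - ols W Mx y T x) \<le> cw * sqrt (2 * real CARD('n) * ln (2 / (1 - \<epsilon>)) + 4 * ln (1 / \<delta>))"
proof -
  define a where "a = 1/2 * cw\<^sup>2 * (1 - \<epsilon>)"
  define \<rho> where "\<rho> = (\<lambda>l. exp (- a * (l \<bullet> (S *v l))))"
  have a: "0 < a"
    using cw_pos \<epsilon> by (simp add: a_def)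
  obtain J where J: "0 < J" and gauss: "\<And>c. 0 < c \<Longrightarrow>
      (\<integral>\<^sup>+l. ennreal (exp (- c * (l \<bullet> (S *v l)))) \<partial>lborel) = ennreal ((1 / sqrt c) ^ CARD('n) * J)"
    using nn_integral_exp_quadratic_form[OF S] by blast
  define B where "B = {x \<in> space M. 1 \<le> ennreal (\<delta> / ((1 / sqrt a) ^ CARD('n) * J)) * mixture \<rho> x}"
  show thesis
  proof
    show "B \<in> sets M"
      unfolding B_def \<rho>_def by measurable
    have "emeasure M B \<le> ennreal \<delta>"
      unfolding B_def \<rho>_def using gauss[OF a] J a \<delta>
      by (intro emeasure_mixture_ge_le) simp_all
    then show "measure M B \<le> \<delta>"
      using \<delta> by (simp add: measure_def enn2real_leI)
    fix x assume "x \<in> space M" "x \<notin> B"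
      and "loewner_le ((1 - \<epsilon>) *\<^sub>R S) (gram W Mx T x)" "loewner_le (gram W Mx T x) ((1 + \<epsilon>) *\<^sub>R S)"
    then show "invertible (gram W Mx T x) \<and>
      A_norm (gram W Mx T x) (\<theta> - ols W Mx y T x) \<le> cw * sqrt (2 * real CARD('n) * ln (2 / (1 - \<epsilon>)) + 4 * ln (1 / \<delta>))"
      using ols_error_le_if_mixture_small[OF S \<epsilon> \<delta> J gauss] by (simp add: B_def \<rho>_def a_def not_le)
  qed
qed

lemma sets_ols_confidence_event:
  "{x \<in> space M. invertible (gram W Mx T x) \<and> A_norm (gram W Mx T x) (\<theta> - ols W Mx y T x) \<le> r} \<in> sets M"
proof -
  have [measurable]: "k \<in> {..<T} \<Longrightarrow> Mx k \<in> borel_measurable M" for k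
    by simp
  show ?thesis
    unfolding invertible_det_nz A_norm_def gram_def by measurable
qed

end

theorem corollary1:
  fixes M :: "'a measure" and T :: nat
    and Mx :: "nat \<Rightarrow> 'a \<Rightarrow> real^'n^'m"
    and y w :: "nat \<Rightarrow> 'a \<Rightarrow> real^'m"
    and \<theta> :: "real^'n" and W :: "real^'m^'m"
    and cw \<epsilon> \<delta>' \<delta> :: real
  assumes "prob_space M"
    and "\<forall>k<T. Mx k \<in> borel_measurable M"
    and "\<forall>k<T. w k \<in> borel_measurable M"
    and "\<forall>t<T. \<forall>x\<in>space M. y (Suc t) x = Mx t x *v \<theta> + w t x"
    and "pd W" and "0 < cw"
    and "\<forall>t<T. \<forall>\<nu>. AE x in M.
           nn_cond_exp M (data_sigma M Mx y t) (\<lambda>x. ennreal (exp (\<nu> \<bullet> w t x))) x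
             \<le> ennreal (exp (1/2 * cw\<^sup>2 * (\<nu> \<bullet> (matrix_inv W *v \<nu>))))"
    and "integrable M (gram W Mx T)"
    and "pd (integral\<^sup>L M (gram W Mx T))"
    and "0 < \<epsilon>" and "\<epsilon> < 1" and "0 < \<delta>'" and "\<delta>' < 1"
    and "measure M {x \<in> space M.
           loewner_le ((1 - \<epsilon>) *\<^sub>R integral\<^sup>L M (gram W Mx T)) (gram W Mx T x) \<and>
           loewner_le (gram W Mx T x) ((1 + \<epsilon>) *\<^sub>R integral\<^sup>L M (gram W Mx T))} \<ge> 1 - \<delta>'"
    and "0 < \<delta>" and "\<delta> < 1"
  shows "measure M {x \<in> space M. invertible (gram W Mx T x) \<and>
           A_norm (gram W Mx T x) (\<theta> - ols W Mx y T x)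
             \<le> cw * sqrt (2 * real CARD('n) * ln (2 / (1 - \<epsilon>)) + 4 * ln (1 / \<delta>))}
         \<ge> 1 - (\<delta> + \<delta>')"
proof -
  interpret ols_model M T Mx y w \<theta> W cw
    unfolding ols_model_def using assms(1-7) by blast
  interpret prob_space M
    by (rule assms(1))
  define S where "S = integral\<^sup>L M (gram W Mx T)"
  define G where "G = {x \<in> space M. loewner_le ((1 - \<epsilon>) *\<^sub>R S) (gram W Mx T x) \<and>
                                   loewner_le (gram W Mx T x) ((1 + \<epsilon>) *\<^sub>R S)}"
  let ?r = "cw * sqrt (2 * real CARD('n) * ln (2 / (1 - \<epsilon>)) + 4 * ln (1 / \<delta>))"
  obtain B where "B \<in> sets M" "measure M B \<le> \<delta>" and bound: "\<And>x. x \<in> space M \<Longrightarrow> x \<notin> B \<Longrightarrow>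
      loewner_le ((1 - \<epsilon>) *\<^sub>R S) (gram W Mx T x) \<Longrightarrow> loewner_le (gram W Mx T x) ((1 + \<epsilon>) *\<^sub>R S) \<Longrightarrow>
      invertible (gram W Mx T x) \<and> A_norm (gram W Mx T x) (\<theta> - ols W Mx y T x) \<le> ?r"
    using ols_error_bounded_off_small_event[OF assms(9)[folded S_def] assms(10,11,15)] by blast
  have "1 - \<delta>' \<le> measure M G"
    using assms(14) by (simp add: G_def S_def)
  \<comment> \<open>non-measurable sets have measure 0, so the lower bound forces \<open>G \<in> sets M\<close>\<close>
  then have "G \<in> sets M"
    using assms(13) measure_notin_sets[of G M] by (cases "G \<in> sets M") simp_all
  have "G - B \<subseteq> {x \<in> space M. invertible (gram W Mx T x) \<and> A_norm (gram W Mx T x) (\<theta> - ols W Mx y T x) \<le> ?r}"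
    using bound by (auto simp: G_def)
  from prob_ge_if_Diff_subset[OF \<open>G \<in> sets M\<close> \<open>B \<in> sets M\<close> sets_ols_confidence_event this
      \<open>measure M B \<le> \<delta>\<close> \<open>1 - \<delta>' \<le> measure M G\<close>]
  show ?thesis .
qed

end
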